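(* Let $H=(V,E)$ be a graph with $|V|\ge 2$, let $F$ be a vector space of dimension $r$ over $\mathbb Z_2$, and assign to each edge $e\in E$ a vector $v(e)\in F$. Suppose that for every set $S$ with $\emptyset\ne S\subsetneq V$, the vectors $\{v(e): e\in (S,V\setminus S)\}$ span $F$, where $(S,V\setminus S)=\{e\in E: e\cap S\neq\emptyset,\ e\cap (V\setminus S)\ne\emptyset\}$. Then $m(H)\ge 2^r$.
   Context: All graphs are finite and simple. For graphs $G_1=(V,E_1)$, $G_2=(V,E_2)$ on the same vertex set, their symmetric difference is the graph $(V,E_1\oplus E_2)$, where $E_1\oplus E_2$ is the set of edges belonging to exactly one of $E_1,E_2$. For a graph $H=(V,E)$, a spanning subgraph of $H$ is a graph $(V,E')$ with $E'\subseteq E$. A connectivity code for $H$ is a collection $\mathcal G$ of distinct spanning subgraphs of $H$ such that the symmetric difference of any two distinct members of $\mathcal G$ is a connected graph on the vertex set $V$. $m(H)$ denotes the maximum cardinality of a connectivity code for $H$. *)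

theory Defs
  imports Complex_Main "HOL-Library.Z2"
begin

definition simple_graph :: "'a set \<Rightarrow> 'a set set \<Rightarrow> bool" where
  "simple_graph V E \<longleftrightarrow> finite V \<and> (\<forall>e\<in>E. e \<subseteq> V \<and> card e = 2)"

definition adj_rel :: "'a set set \<Rightarrow> ('a \<times> 'a) set" where
  "adj_rel E = {(x, y). {x, y} \<in> E}"

definition connected_graph :: "'a set \<Rightarrow> 'a set set \<Rightarrow> bool" where
  "connected_graph V E \<longleftrightarrow> V \<noteq> {} \<and> (\<forall>x\<in>V. \<forall>y\<in>V. (x, y) \<in> (adj_rel E)\<^sup>*)"

text \<open>Spanning subgraphs of (V,E) are identified with their edge sets A \<subseteq> E.\<close>
definition connectivity_code :: "'a set \<Rightarrow> 'a set set \<Rightarrow> 'a set set set \<Rightarrow> bool" where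
  "connectivity_code V E G \<longleftrightarrow> (\<forall>A\<in>G. A \<subseteq> E) \<and>
     (\<forall>A\<in>G. \<forall>B\<in>G. A \<noteq> B \<longrightarrow> connected_graph V ((A - B) \<union> (B - A)))"

definition m_code :: "'a set \<Rightarrow> 'a set set \<Rightarrow> nat" where
  "m_code V E = Max {card G | G. connectivity_code V E G}"

definition edge_cut :: "'a set \<Rightarrow> 'a set set \<Rightarrow> 'a set \<Rightarrow> 'a set set" where
  "edge_cut V E S = {e\<in>E. e \<inter> S \<noteq> {} \<and> e \<inter> (V - S) \<noteq> {}}"

end

theory Submission
  imports Defs
begin

text \<open>For a linear functional \<open>\<phi>\<close> on \<open>F\<close> let \<open>A\<^sub>\<phi>\<close> be the set of edges \<open>e\<close> with \<open>\<phi> (v e) = 1\<close>.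
  The symmetric difference of \<open>A\<^sub>\<phi>\<close> and \<open>A\<^sub>\<psi>\<close> is \<open>A\<^sub>\<phi>\<^sub>+\<^sub>\<psi>\<close>. If \<open>\<phi> \<noteq> \<psi>\<close>, the functional
  \<open>\<phi> + \<psi>\<close> is nonzero, so it cannot vanish on the vectors of any cut, which span \<open>F\<close>; hence
  \<open>A\<^sub>\<phi>\<^sub>+\<^sub>\<psi>\<close> meets every cut and is connected. The \<open>2\<^sup>r\<close> functionals on \<open>F\<close> thus give a
  connectivity code of size \<open>2\<^sup>r\<close>.\<close>

lemma connected_graph_if_meets_every_cut:
  assumes graph: "simple_graph V E" and "V \<noteq> {}"
    and meets: "\<And>S. S \<noteq> {} \<Longrightarrow> S \<subset> V \<Longrightarrow> edge_cut V E S \<inter> X \<noteq> {}"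
  shows "connected_graph V X"
proof -
  obtain x0 where x0: "x0 \<in> V" using \<open>V \<noteq> {}\<close> by blast
  define S where "S = {y\<in>V. (x0, y) \<in> (adj_rel X)\<^sup>*}"
  have "S = V"
  proof (rule ccontr)
    assume "S \<noteq> V"
    moreover have "S \<subseteq> V" "S \<noteq> {}" using x0 by (auto simp: S_def)
    ultimately obtain e where e: "e \<in> edge_cut V E S" "e \<in> X" using meets by blast
    then have "card e = 2" "e \<inter> S \<noteq> {}" "e \<inter> (V - S) \<noteq> {}"
      using graph unfolding edge_cut_def simple_graph_def by auto
    then obtain a b where "e = {a, b}" "a \<in> S" "b \<in> V - S"
      by (auto simp: card_2_iff)
    then have "(x0, a) \<in> (adj_rel X)\<^sup>*" "(a, b) \<in> adj_rel X" "b \<notin> S" "b \<in> V"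
      using e(2) by (auto simp: S_def adj_rel_def)
    then show False by (auto simp: S_def intro: rtrancl_into_rtrancl)
  qed
  moreover have "sym ((adj_rel X)\<^sup>*)"
    by (rule sym_rtrancl) (auto simp: sym_def adj_rel_def insert_commute)
  ultimately show ?thesis
    using \<open>V \<noteq> {}\<close> unfolding connected_graph_def S_def
    by (metis (mono_tags, lifting) mem_Collect_eq rtrancl_trans symD)
qed

lemma connected_graph_edges_nonempty:
  assumes "connected_graph V X" and "card V \<ge> 2"
  shows "X \<noteq> {}"
proof
  assume "X = {}"
  obtain x y where "x \<in> V" "y \<in> V" "x \<noteq> y"
    using \<open>card V \<ge> 2\<close> card_le_Suc0_iff_eq[of V] by (fastforce dest: card.infinite)
  then have "(x, y) \<in> (adj_rel X)\<^sup>*" using assms(1) by (simp add: connected_graph_def)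
  then show False using \<open>X = {}\<close> \<open>x \<noteq> y\<close> by (simp add: adj_rel_def)
qed

lemma card_le_m_code:
  assumes "simple_graph V E" and "connectivity_code V E G"
  shows "card G \<le> m_code V E"
proof -
  have "finite E"
    using assms(1) unfolding simple_graph_def by (meson Pow_iff finite_Pow_iff rev_finite_subset subsetI)
  then have "{card G | G. connectivity_code V E G} \<subseteq> {..card (Pow E)}"
    by (auto simp: connectivity_code_def intro!: card_mono)
  then have "finite {card G | G. connectivity_code V E G}"
    using finite_subset by blast
  then show ?thesis
    unfolding m_code_def using assms(2) by (auto intro: Max_ge)
qed

lemma connected_graph_support_of_functional:
  fixes scale :: "bit \<Rightarrow> 'v::ab_group_add \<Rightarrow> 'v" and \<phi> :: "'v \<Rightarrow> bit"
  assumes "simple_graph V E" and "V \<noteq> {}"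
    and "Vector_Spaces.linear scale (*) \<phi>" and "\<phi> x \<noteq> 0"
    and spans: "\<forall>S. S \<noteq> {} \<and> S \<subset> V \<longrightarrow> module.span scale (v ` edge_cut V E S) = UNIV"
  shows "connected_graph V {e\<in>E. \<phi> (v e) = 1}"
proof (rule connected_graph_if_meets_every_cut[OF assms(1,2)])
  interpret Vector_Spaces.linear scale "(*)" \<phi> by fact
  fix S assume "S \<noteq> {}" "S \<subset> V"
  show "edge_cut V E S \<inter> {e\<in>E. \<phi> (v e) = 1} \<noteq> {}"
  proof
    assume "edge_cut V E S \<inter> {e\<in>E. \<phi> (v e) = 1} = {}"
    then have "\<phi> y = 0" if "y \<in> v ` edge_cut V E S" for y
      using that by (auto simp: edge_cut_def)
    moreover have "x \<in> vs1.span (v ` edge_cut V E S)"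
      using spans \<open>S \<noteq> {}\<close> \<open>S \<subset> V\<close> by blast
    ultimately show False
      using eq_0_on_span \<open>\<phi> x \<noteq> 0\<close> by blast
  qed
qed

lemma card_linear_functionals_bit:
  fixes scale :: "bit \<Rightarrow> 'v::ab_group_add \<Rightarrow> 'v"
  assumes "vector_space scale" and "module.independent scale B"
    and "module.span scale B = UNIV" and "finite B"
  obtains \<Phi> where "card \<Phi> = 2 ^ card B" and "\<forall>\<phi>\<in>\<Phi>. Vector_Spaces.linear scale (*) \<phi>"
proof -
  interpret vector_space scale by fact
  define coord_sum where "coord_sum T x = (\<Sum>b\<in>T. representation B x b)" for T x
  have "Vector_Spaces.linear scale (*) (coord_sum T)" for T
    unfolding coord_sum_def
    using linear_representation[OF assms(2,3)]
    by (intro vector_space_pair.linear_compose_sum) (unfold_locales, auto simp: algebra_simps)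
  moreover have "inj_on coord_sum (Pow B)"
  proof (rule inj_onI)
    fix T U assume "T \<in> Pow B" "U \<in> Pow B" "coord_sum T = coord_sum U"
    have "coord_sum W b = (if b \<in> W then 1 else 0)" if "W \<subseteq> B" "b \<in> B" for W b
      using that \<open>finite B\<close> unfolding coord_sum_def representation_basis[OF assms(2) \<open>b \<in> B\<close>]
      by (simp add: sum.delta finite_subset)
    then show "T = U"
      using \<open>T \<in> Pow B\<close> \<open>U \<in> Pow B\<close> \<open>coord_sum T = coord_sum U\<close>
      by (metis Pow_iff subset_antisym subsetI subsetD zero_neq_one)
  qed
  ultimately show thesis
    by (intro that[of "coord_sum ` Pow B"]) (simp_all add: card_image card_Pow \<open>finite B\<close>)
qed

lemma card_linear_functionals_le_m_code:
  fixes scale :: "bit \<Rightarrow> 'v::ab_group_add \<Rightarrow> 'v" and \<Phi> :: "('v \<Rightarrow> bit) set"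
  assumes graph: "simple_graph V E" and "card V \<ge> 2"
    and lin: "\<forall>\<phi>\<in>\<Phi>. Vector_Spaces.linear scale (*) \<phi>"
    and spans: "\<forall>S. S \<noteq> {} \<and> S \<subset> V \<longrightarrow> module.span scale (v ` edge_cut V E S) = UNIV"
  shows "card \<Phi> \<le> m_code V E"
proof -
  define support where "support \<phi> = {e\<in>E. \<phi> (v e) = 1}" for \<phi> :: "'v \<Rightarrow> bit"
  have "V \<noteq> {}" using \<open>card V \<ge> 2\<close> by auto
  have sum_linear: "Vector_Spaces.linear scale (*) (\<lambda>x. \<phi> x + \<psi> x)"
    if "\<phi> \<in> \<Phi>" "\<psi> \<in> \<Phi>" for \<phi> \<psi>
    using lin that
    by (intro vector_space_pair.linear_compose_add) (auto simp: vector_space_pair_def Vector_Spaces.linear_def)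
  have connected: "connected_graph V ((support \<phi> - support \<psi>) \<union> (support \<psi> - support \<phi>))"
    if "\<phi> \<in> \<Phi>" "\<psi> \<in> \<Phi>" "\<phi> \<noteq> \<psi>" for \<phi> \<psi>
  proof -
    obtain x where "\<phi> x \<noteq> \<psi> x"
      using \<open>\<phi> \<noteq> \<psi>\<close> by (meson ext)
    then have "\<phi> x + \<psi> x \<noteq> 0"
      by (cases "\<phi> x"; cases "\<psi> x") simp_all
    moreover have "(support \<phi> - support \<psi>) \<union> (support \<psi> - support \<phi>)
        = {e\<in>E. \<phi> (v e) + \<psi> (v e) = 1}"
      unfolding support_def by auto
    ultimately show ?thesis
      using connected_graph_support_of_functional[OF graph \<open>V \<noteq> {}\<close> sum_linear[OF that(1,2)]]
        spans by simp
  qed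
  have "inj_on support \<Phi>"
  proof (rule inj_onI)
    fix \<phi> \<psi> assume "\<phi> \<in> \<Phi>" "\<psi> \<in> \<Phi>" "support \<phi> = support \<psi>"
    then show "\<phi> = \<psi>"
      using connected[of \<phi> \<psi>] connected_graph_edges_nonempty[OF _ \<open>card V \<ge> 2\<close>] by auto
  qed
  moreover have "connectivity_code V E (support ` \<Phi>)"
    using connected by (auto simp: connectivity_code_def support_def)
  ultimately show ?thesis
    using card_le_m_code[OF graph] by (metis card_image)
qed

theorem lemma2p1:
  fixes V :: "'a set" and E :: "'a set set"
    and scale :: "bit \<Rightarrow> 'v::ab_group_add \<Rightarrow> 'v"
    and r :: nat and v :: "'a set \<Rightarrow> 'v"
  assumes "simple_graph V E"
    and "card V \<ge> 2"
    and "vector_space scale"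
    and "\<exists>B. finite B \<and> module.span scale B = UNIV"
    and "vector_space.dim scale UNIV = r"
    and "\<forall>S. S \<noteq> {} \<and> S \<subset> V \<longrightarrow> module.span scale (v ` edge_cut V E S) = UNIV"
  shows "m_code V E \<ge> 2 ^ r"
proof -
  interpret vector_space scale by fact
  obtain B0 where "finite B0" "span B0 = UNIV" using assms(4) by blast
  obtain B where B: "independent B" "span B = UNIV" "card B = r"
    using basis_exists[of UNIV] assms(5) by (metis span_UNIV span_mono subset_antisym top_greatest)
  have "finite B"
    using independent_span_bound[OF \<open>finite B0\<close> B(1)] \<open>span B0 = UNIV\<close> by auto
  obtain \<Phi> where "card \<Phi> = 2 ^ r" "\<forall>\<phi>\<in>\<Phi>. Vector_Spaces.linear scale (*) \<phi>"
    using card_linear_functionals_bit[OF assms(3) B(1,2) \<open>finite B\<close>] B(3) by metis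
  then show ?thesis
    using card_linear_functionals_le_m_code[OF assms(1,2) _ assms(6)] by metis
qed

end
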